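(* Let $m\ge 2$ and let $\mathcal{A}\subseteq\mathcal{P}([m])$ be a finite union-closed, separating collection of sets with universe $U(\mathcal{A})=[m]=\{1,\dots,m\}$, where the elements are labelled so that $|1|_{\mathcal{A}}\le |2|_{\mathcal{A}}\le\dots\le |m|_{\mathcal{A}}$. For $i\in[m-1]$ let $A_i:=\bigcup_{A\in\mathcal{A},\, i\notin A} A$, let $A_0:=U(\mathcal{A})$, and let $\mathcal{S}$ be the collection $\{A_0,A_1,\dots,A_{m-1}\}$. Then for every $i\in\{1,\dots,m-1\}$ with $|i|_{\mathcal{S}}<m-1$, there exists an element $k\in\{1,\dots,m-1\}$ with $|k|_{\mathcal{S}}=m-1$ that dominates $i$ in $\mathcal{A}$.
   Context: A collection $\mathcal{A}$ of sets is union-closed if $S,T\in\mathcal{A}$ implies $S\cup T\in\mathcal{A}$. The universe $U(\mathcal{A})$ is $\bigcup_{A\in\mathcal{A}}A$. $\mathcal{A}$ is separating if for any two distinct elements of $U(\mathcal{A})$ there is a set in $\mathcal{A}$ containing one of them but not the other. For an element $a$ and a collection $\mathcal{B}$, $|a|_{\mathcal{B}}$ denotes the number of sets in $\mathcal{B}$ containing $a$. An element $b$ dominates an element $c$ in $\mathcal{A}$ if every set of $\mathcal{A}$ that contains $c$ also contains $b$. (Under the hypotheses, for each $i\in[m-1]$ there is a set of $\mathcal{A}$ not containing $i$, and $A_i$ contains every $j>i$ but not $i$, so the sets $A_0,\dots,A_{m-1}$ are distinct.) *)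

theory Defs
  imports Main
begin

definition union_closed :: "'a set set \<Rightarrow> bool" where
  "union_closed \<A> \<longleftrightarrow> (\<forall>S\<in>\<A>. \<forall>T\<in>\<A>. S \<union> T \<in> \<A>)"

definition universe :: "'a set set \<Rightarrow> 'a set" where
  "universe \<A> = \<Union>\<A>"

definition separating :: "'a set set \<Rightarrow> bool" where
  "separating \<A> \<longleftrightarrow> (\<forall>x\<in>universe \<A>. \<forall>y\<in>universe \<A>. x \<noteq> y \<longrightarrow>
      (\<exists>A\<in>\<A>. (x \<in> A \<and> y \<notin> A) \<or> (y \<in> A \<and> x \<notin> A)))"

definition occ :: "'a \<Rightarrow> 'a set set \<Rightarrow> nat" where
  "occ a \<B> = card {B \<in> \<B>. a \<in> B}"

definition dominates :: "'a set set \<Rightarrow> 'a \<Rightarrow> 'a \<Rightarrow> bool" where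
  "dominates \<A> b c \<longleftrightarrow> (\<forall>A\<in>\<A>. c \<in> A \<longrightarrow> b \<in> A)"

definition Aset :: "'a set set \<Rightarrow> 'a \<Rightarrow> 'a set" where
  "Aset \<A> i = \<Union>{A \<in> \<A>. i \<notin> A}"

end

theory Submission
  imports Defs
begin

text \<open>
  \<open>k\<close> dominates \<open>i\<close> exactly when \<open>i \<notin> A\<^sub>k\<close>. Separation together with the ordering by
  frequency forces \<open>j \<in> A\<^sub>i\<close> whenever \<open>i < j\<close>. Hence the largest \<open>k < m\<close> dominating \<open>i\<close>
  lies in every \<open>A\<^sub>j\<close> with \<open>j \<noteq> k\<close>: for \<open>j < k\<close> by the ordering, and for \<open>j > k\<close> since
  otherwise \<open>j\<close> would dominate \<open>k\<close> and hence \<open>i\<close>. As the \<open>m\<close> sets of \<open>\<S>\<close> are distinct,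
  \<open>k\<close> lies in all of them but \<open>A\<^sub>k\<close>.
\<close>

lemma dominates_iff_notin_Aset: "dominates \<A> j i \<longleftrightarrow> i \<notin> Aset \<A> j"
  unfolding dominates_def Aset_def by blast

lemma notin_Aset_self: "i \<notin> Aset \<A> i"
  unfolding Aset_def by blast

lemma dominates_trans: "dominates \<A> a b \<Longrightarrow> dominates \<A> b c \<Longrightarrow> dominates \<A> a c"
  unfolding dominates_def by blast

lemma separating_not_mutually_dominating:
  assumes "separating \<A>" "i \<in> universe \<A>" "j \<in> universe \<A>" "i \<noteq> j"
  shows "\<not> (dominates \<A> i j \<and> dominates \<A> j i)"
  using assms unfolding separating_def dominates_def by metis

lemma in_Aset_if_occ_le:
  assumes "finite \<A>" "separating \<A>" "i \<in> universe \<A>" "j \<in> universe \<A>" "i \<noteq> j"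
    and "occ i \<A> \<le> occ j \<A>"
  shows "j \<in> Aset \<A> i"
proof (rule ccontr)
  assume "j \<notin> Aset \<A> i"
  then have dom_ij: "dominates \<A> i j"
    by (simp add: dominates_iff_notin_Aset)
  then have sub: "{B \<in> \<A>. j \<in> B} \<subseteq> {B \<in> \<A>. i \<in> B}"
    unfolding dominates_def by blast
  have fin: "finite {B \<in> \<A>. i \<in> B}"
    using assms(1) by simp
  have "card {B \<in> \<A>. j \<in> B} = card {B \<in> \<A>. i \<in> B}"
    using card_mono[OF fin sub] assms(6) unfolding occ_def by (rule le_antisym)
  with fin sub have "{B \<in> \<A>. j \<in> B} = {B \<in> \<A>. i \<in> B}"
    by (rule card_subset_eq)
  then have "dominates \<A> j i"
    unfolding dominates_def by blast
  with dom_ij separating_not_mutually_dominating[OF assms(2-5)] show False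
    by blast
qed

lemma inj_on_Aset:
  assumes "separating \<A>"
  shows "inj_on (Aset \<A>) (universe \<A>)"
proof (rule inj_onI)
  fix i j assume ij: "i \<in> universe \<A>" "j \<in> universe \<A>" "Aset \<A> i = Aset \<A> j"
  have "dominates \<A> i j" "dominates \<A> j i"
    unfolding dominates_iff_notin_Aset using ij(3) notin_Aset_self by metis+
  with separating_not_mutually_dominating[OF assms ij(1,2)] show "i = j"
    by blast
qed

lemma universe_notin_Aset_image:
  assumes "I \<subseteq> universe \<A>"
  shows "universe \<A> \<notin> Aset \<A> ` I"
proof
  assume "universe \<A> \<in> Aset \<A> ` I"
  then obtain i where "i \<in> I" "universe \<A> = Aset \<A> i" ..
  with assms notin_Aset_self show False
    by (metis subsetD)
qed

lemma card_Aset_family: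
  assumes "separating \<A>" "finite I" "I \<subseteq> universe \<A>"
  shows "card (insert (universe \<A>) (Aset \<A> ` I)) = card I + 1"
proof -
  have "card (Aset \<A> ` I) = card I"
    using inj_on_subset[OF inj_on_Aset[OF assms(1)] assms(3)] by (rule card_image)
  then show ?thesis
    using assms(2) universe_notin_Aset_image[OF assms(3)] by simp
qed

lemma occ_Aset_family:
  assumes "finite I" "I \<subseteq> universe \<A>" "k \<in> I"
    and "\<And>j. j \<in> I \<Longrightarrow> j \<noteq> k \<Longrightarrow> k \<in> Aset \<A> j"
  defines "\<S> \<equiv> insert (universe \<A>) (Aset \<A> ` I)"
  shows "occ k \<S> = card \<S> - 1"
proof -
  have "{B \<in> \<S>. k \<in> B} = \<S> - {Aset \<A> k}"
  proof (rule set_eqI, rule iffI)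
    fix B assume "B \<in> {B \<in> \<S>. k \<in> B}"
    then show "B \<in> \<S> - {Aset \<A> k}"
      using notin_Aset_self[of k \<A>] by auto
  next
    fix B assume B: "B \<in> \<S> - {Aset \<A> k}"
    then consider "B = universe \<A>" | j where "j \<in> I" "j \<noteq> k" "B = Aset \<A> j"
      unfolding \<S>_def by auto
    then show "B \<in> {B \<in> \<S>. k \<in> B}"
      using B assms(2-4) by cases auto
  qed
  moreover have "Aset \<A> k \<in> \<S>" "finite \<S>"
    using assms(1,3) unfolding \<S>_def by auto
  ultimately show ?thesis
    unfolding occ_def by simp
qed

lemma max_dominator_in_other_Asets:
  fixes I :: "'a::linorder set"
  assumes "finite I" "i \<in> I"
    and ordered: "\<And>j l. j \<in> I \<Longrightarrow> l \<in> I \<Longrightarrow> j < l \<Longrightarrow> l \<in> Aset \<A> j"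
  defines "k \<equiv> Max {k \<in> I. dominates \<A> k i}"
  shows "k \<in> I" "dominates \<A> k i" "\<And>j. j \<in> I \<Longrightarrow> j \<noteq> k \<Longrightarrow> k \<in> Aset \<A> j"
proof -
  let ?D = "{k \<in> I. dominates \<A> k i}"
  have "i \<in> ?D"
    using assms(2) unfolding dominates_def by blast
  moreover have "finite ?D"
    using assms(1) by simp
  ultimately have "k \<in> ?D"
    unfolding k_def by (intro Max_in) auto
  have k_max: "j \<le> k" if "j \<in> ?D" for j
    unfolding k_def using \<open>finite ?D\<close> that by (rule Max_ge)
  from \<open>k \<in> ?D\<close> show k: "k \<in> I" "dominates \<A> k i" by auto
  fix j assume j: "j \<in> I" "j \<noteq> k"
  show "k \<in> Aset \<A> j"
  proof (cases "j < k")
    case True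
    with ordered j(1) k(1) show ?thesis by blast
  next
    case False
    show ?thesis
    proof (rule ccontr)
      assume "k \<notin> Aset \<A> j"
      then have "dominates \<A> j k"
        by (simp add: dominates_iff_notin_Aset)
      then have "dominates \<A> j i"
        using k(2) by (rule dominates_trans)
      with j k_max False show False by fastforce
    qed
  qed
qed

theorem lemma1:
  fixes m :: nat and \<A> :: "nat set set"
  assumes "m \<ge> 2"
    and "finite \<A>"
    and "\<A> \<subseteq> Pow {1..m}"
    and "union_closed \<A>"
    and "separating \<A>"
    and "universe \<A> = {1..m}"
    and "\<And>i j. i \<in> {1..m} \<Longrightarrow> j \<in> {1..m} \<Longrightarrow> i \<le> j \<Longrightarrow> occ i \<A> \<le> occ j \<A>"
    and "\<S> = insert (universe \<A>) ((\<lambda>i. Aset \<A> i) ` {1..m-1})"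
  shows "\<forall>i \<in> {1..m-1}. occ i \<S> < m - 1 \<longrightarrow>
           (\<exists>k \<in> {1..m-1}. occ k \<S> = m - 1 \<and> dominates \<A> k i)"
proof (intro ballI impI)
  fix i assume i: "i \<in> {1..m-1}"
  let ?I = "{1..m-1}"
  have I_universe: "?I \<subseteq> universe \<A>"
    using assms(6) by auto
  have ordered: "l \<in> Aset \<A> j" if "j \<in> ?I" "l \<in> ?I" "j < l" for j l
  proof (rule in_Aset_if_occ_le[OF assms(2,5)])
    show "j \<in> universe \<A>" "l \<in> universe \<A>" "j \<noteq> l"
      using that I_universe by auto
    show "occ j \<A> \<le> occ l \<A>"
      using that by (intro assms(7)) auto
  qed
  obtain k where k: "k \<in> ?I" "dominates \<A> k i"
    and k_in: "\<And>j. j \<in> ?I \<Longrightarrow> j \<noteq> k \<Longrightarrow> k \<in> Aset \<A> j"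
    using max_dominator_in_other_Asets[OF finite_atLeastAtMost i ordered] by blast
  have "card \<S> = m"
    using card_Aset_family[OF assms(5) _ I_universe] assms(1,8) by simp
  moreover have "occ k \<S> = card \<S> - 1"
    using occ_Aset_family[OF _ I_universe k(1) k_in] assms(8) by simp
  ultimately show "\<exists>k \<in> ?I. occ k \<S> = m - 1 \<and> dominates \<A> k i"
    using k by auto
qed

end
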